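(* Let $n\ge5$ be odd, $k=\frac{n-3}{2}$, $G=(V,E)=K_n$, let $C=(v_1,\dots,v_{2k+1})$ be a cycle of length $n-2$ in $G$ and $s,t$ the two vertices not on $C$. Then the canonical transformation of the $C$-induced constraint $x_{\{s,t\}}+k\cdot x(\delta(V(C)))+\sum_{e\in E[V\setminus\{s,t\}]}\ell(e)x_e\ge 2k+1$ defines a facet of $P_{(\widehat G,\widehat R)}$.
   Context: $\delta(V(C))$ is the set of edges with exactly one endpoint on $C$, $E[S]$ the set of edges with both endpoints in $S$, $x(S)=\sum_{e\in S}x_e$; for $i\ne j$, $\ell(\{v_i,v_j\})=|j-i|$ if $|j-i|$ is odd and $2k+1-|j-i|$ otherwise. The bipartite graph $\widehat G=(\widehat V,\widehat E)$ has vertex set $\{v^+\colon v\in V\}\cup\{v^-\colon v\in V\}$ and edges $\{v^+,v^-\}$ for $v\in V$ and $\{u^+,v^-\},\{u^-,v^+\}$ for each $\{u,v\}\in E$; red edges $\widehat R=\widehat E\setminus\{\{v^+,v^-\}\colon v\in V\}$. $P_{(\widehat G,\widehat R)}$ is the convex hull of incidence vectors of perfect matchings $M$ of $\widehat G$ with $|M\cap\widehat R|$ odd. The canonical transformation of $\sum_{e\in E}a_ex_e\ge b$ is $\sum_{\{u,v\}\in E}a_{\{u,v\}}(y_{\{u^+,v^-\}}+y_{\{u^-,v^+\}})\ge b$ in variables $y\in\mathbb{R}^{\widehat E}$. *)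

theory Defs
  imports "HOL-Analysis.Analysis"
begin

text \<open>Vertices of the auxiliary graph: (v, True) is v^+, (v, False) is v^-.
  Vectors y in R^(hat E) are represented in the ambient space indexed by all
  sets of auxiliary vertices (a finite type); only coordinates at edges of
  hat G are used.  Affine dimension and faces are intrinsic, so this is harmless.\<close>

type_synonym ('v) hvec = "real ^ (('v \<times> bool) set)"

definition complete_edges :: "'v set \<Rightarrow> 'v set set" where
  "complete_edges V = {{u, v} | u v. u \<in> V \<and> v \<in> V \<and> u \<noteq> v}"

definition hat_vertices :: "'v set \<Rightarrow> ('v \<times> bool) set" where
  "hat_vertices V = {(v, True) | v. v \<in> V} \<union> {(v, False) | v. v \<in> V}"

definition hat_edges :: "'v set \<Rightarrow> 'v set set \<Rightarrow> ('v \<times> bool) set set" where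
  "hat_edges V E =
     {{(v, True), (v, False)} | v. v \<in> V}
     \<union> {{(u, True), (v, False)} | u v. {u, v} \<in> E}
     \<union> {{(u, False), (v, True)} | u v. {u, v} \<in> E}"

definition hat_red :: "'v set \<Rightarrow> 'v set set \<Rightarrow> ('v \<times> bool) set set" where
  "hat_red V E = hat_edges V E - {{(v, True), (v, False)} | v. v \<in> V}"

definition perfect_matching :: "'a set \<Rightarrow> 'a set set \<Rightarrow> 'a set set \<Rightarrow> bool" where
  "perfect_matching W F M \<longleftrightarrow> M \<subseteq> F \<and> (\<forall>x\<in>W. \<exists>!e. e \<in> M \<and> x \<in> e)"

definition incidence :: "('v::finite \<times> bool) set set \<Rightarrow> 'v hvec" where
  "incidence M = (\<chi> e. if e \<in> M then 1 else 0)"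

definition odd_pm_polytope :: "'v::finite set \<Rightarrow> 'v set set \<Rightarrow> 'v hvec set" where
  "odd_pm_polytope V E = convex hull
     {incidence M | M. perfect_matching (hat_vertices V) (hat_edges V E) M
                       \<and> odd (card (M \<inter> hat_red V E))}"

definition endpts :: "'v set \<Rightarrow> 'v \<times> 'v" where
  "endpts e = (SOME p. e = {fst p, snd p})"

definition canon_lhs :: "'v::finite set set \<Rightarrow> ('v set \<Rightarrow> real) \<Rightarrow> 'v hvec \<Rightarrow> real" where
  "canon_lhs E a y = (\<Sum>e\<in>E. a e *
      (y $ {(fst (endpts e), True), (snd (endpts e), False)}
     + y $ {(fst (endpts e), False), (snd (endpts e), True)}))"

definition cut_edges :: "'v set set \<Rightarrow> 'v set \<Rightarrow> 'v set set" where
  "cut_edges E S = {e \<in> E. card (e \<inter> S) = 1}"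

definition induced_edges :: "'v set set \<Rightarrow> 'v set \<Rightarrow> 'v set set" where
  "induced_edges E S = {e \<in> E. e \<subseteq> S}"

definition ell :: "(nat \<Rightarrow> 'v) \<Rightarrow> nat \<Rightarrow> 'v set \<Rightarrow> nat" where
  "ell c k e = (let p = (SOME p. fst p \<in> {1..2*k+1} \<and> snd p \<in> {1..2*k+1}
                                \<and> fst p \<noteq> snd p \<and> e = {c (fst p), c (snd p)});
                    d = nat \<bar>int (snd p) - int (fst p)\<bar>
                in if odd d then d else 2*k+1-d)"

definition C_induced_coeff ::
  "'v set \<Rightarrow> 'v set set \<Rightarrow> (nat \<Rightarrow> 'v) \<Rightarrow> nat \<Rightarrow> 'v \<Rightarrow> 'v \<Rightarrow> 'v set \<Rightarrow> real" where
  "C_induced_coeff V E c k s t e =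
     (if e = {s, t} then 1 else 0)
   + (if e \<in> cut_edges E (c ` {1..2*k+1}) then real k else 0)
   + (if e \<in> induced_edges E (V - {s, t}) then real (ell c k e) else 0)"

end

theory Submission
  imports Defs "HOL-Combinatorics.Cycles"
begin

text \<open>
  A perfect matching of the doubled complete graph pairs each u+ with (p u)- for a permutation p,
  its red edges are the non-fixed points of p, and the canonical transformation evaluates on it to
  the cost of p: the sum of a{u, p u} over the non-fixed points u.

  If p maps C into itself, lift the displacement of each vertex of C to an odd integer
  congruent to it modulo 2k+1 whose absolute value is the length l; an odd number of odd integers
  summing to a multiple of 2k+1 have absolute values summing to at least 2k+1. Otherwise p sends a
  vertex of C to a terminal and a terminal into C, at cost k each, and a third moved vertex costs
  at least 1.

  The 3-cycles on triangles of total l-length 2k+1 (in both orientations) and the rotation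
  of C are tight. If a cost matrix L takes the same value on all of them and on one non-tight
  5-cycle, then after subtracting its diagonal its skew part is a potential difference and its
  symmetric part vanishes, so L is constant on all permutations: the tight vectors together with
  the 5-cycle affinely span every vertex of the polytope.
\<close>

section \<open>Perfect matchings of the doubled complete graph\<close>

definition hat_edge :: "'v \<Rightarrow> 'v \<Rightarrow> ('v \<times> bool) set" where
  "hat_edge u v = {(u, True), (v, False)}"

lemma hat_edge_eq_iff [simp]: "hat_edge u v = hat_edge u' v' \<longleftrightarrow> u = u' \<and> v = v'"
  unfolding hat_edge_def by (auto simp: doubleton_eq_iff)

lemma in_hat_edge_True [simp]: "(x, True) \<in> hat_edge u v \<longleftrightarrow> x = u"
  and in_hat_edge_False [simp]: "(x, False) \<in> hat_edge u v \<longleftrightarrow> x = v"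
  unfolding hat_edge_def by auto

lemma doubleton_in_complete_edges [simp]: "{u, v} \<in> complete_edges UNIV \<longleftrightarrow> u \<noteq> v"
  unfolding complete_edges_def by (auto simp: doubleton_eq_iff)

lemma hat_edges_complete: "hat_edges UNIV (complete_edges UNIV) = range (case_prod hat_edge)"
proof -
  have swap: "{(u, False), (v, True)} = hat_edge v u" for u v :: 'v
    unfolding hat_edge_def by auto
  show ?thesis
    unfolding hat_edges_def swap by (auto simp: hat_edge_def[symmetric])
qed

lemma hat_red_complete: "hat_red UNIV (complete_edges UNIV) = {hat_edge u v | u v. u \<noteq> v}"
  unfolding hat_red_def hat_edges_complete by (auto simp: hat_edge_def[symmetric])

lemma hat_vertices_UNIV [simp]: "hat_vertices UNIV = UNIV"
  unfolding hat_vertices_def by auto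

definition perm_matching :: "('v \<Rightarrow> 'v) \<Rightarrow> ('v \<times> bool) set set" where
  "perm_matching p = range (\<lambda>u. hat_edge u (p u))"

lemma perm_matching_perfect:
  fixes p :: "'v \<Rightarrow> 'v"
  assumes "bij p"
  shows "perfect_matching (hat_vertices UNIV) (hat_edges UNIV (complete_edges UNIV)) (perm_matching p)"
  unfolding perfect_matching_def hat_vertices_UNIV hat_edges_complete
proof (intro conjI ballI)
  show "perm_matching p \<subseteq> range (case_prod hat_edge)" by (auto simp: perm_matching_def)
  fix x :: "'v \<times> bool"
  obtain y b where x: "x = (y, b)" by (cases x)
  show "\<exists>!e. e \<in> perm_matching p \<and> x \<in> e"
  proof (cases b)
    case True
    show ?thesis
      by (rule ex1I[of _ "hat_edge y (p y)"]) (auto simp: x True perm_matching_def)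
  next
    case False
    obtain z where z: "p z = y" using assms by (metis bij_pointE)
    show ?thesis
    proof (rule ex1I[of _ "hat_edge z y"])
      show "hat_edge z y \<in> perm_matching p \<and> x \<in> hat_edge z y"
        unfolding perm_matching_def using z by (auto simp: x False)
    next
      fix e assume "e \<in> perm_matching p \<and> x \<in> e"
      then obtain u where "e = hat_edge u (p u)" "p u = y"
        by (auto simp: perm_matching_def x False)
      with z assms show "e = hat_edge z y" by (metis bij_def injD)
    qed
  qed
qed

lemma perfect_matching_complete_unique:
  assumes "perfect_matching (hat_vertices UNIV) (hat_edges UNIV (complete_edges UNIV)) M"
  shows "M \<subseteq> range (case_prod hat_edge)" and "\<exists>!e. e \<in> M \<and> x \<in> e"
    and "\<exists>!v. hat_edge u v \<in> M"
proof -
  note pm = assms[unfolded perfect_matching_def hat_edges_complete hat_vertices_UNIV]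
  show sub: "M \<subseteq> range (case_prod hat_edge)" using pm by (rule conjunct1)
  have uniq: "\<exists>!e. e \<in> M \<and> x \<in> e" for x by (rule bspec[OF conjunct2[OF pm] UNIV_I])
  then show "\<exists>!e. e \<in> M \<and> x \<in> e" .
  obtain e where e: "e \<in> M" "(u, True) \<in> e"
    and e_uniq: "\<And>e'. e' \<in> M \<Longrightarrow> (u, True) \<in> e' \<Longrightarrow> e' = e"
    using uniq[of "(u, True)"] by metis
  obtain a v where "e = hat_edge a v" using sub e(1) by auto
  with e have ev: "e = hat_edge u v" by simp
  show "\<exists>!v. hat_edge u v \<in> M"
  proof (rule ex1I[of _ v])
    show "hat_edge u v \<in> M" using e ev by simp
    fix v' assume "hat_edge u v' \<in> M"
    then have "hat_edge u v' = e" using e_uniq by simp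
    then show "v' = v" using ev by simp
  qed
qed

lemma perfect_matching_imp_perm:
  fixes M :: "('v::finite \<times> bool) set set"
  assumes "perfect_matching (hat_vertices UNIV) (hat_edges UNIV (complete_edges UNIV)) M"
  obtains p where "bij p" "M = perm_matching p"
proof -
  note sub = perfect_matching_complete_unique(1)[OF assms]
    and uniq = perfect_matching_complete_unique(2)[OF assms]
    and partner = perfect_matching_complete_unique(3)[OF assms]
  define p where "p u = (THE v. hat_edge u v \<in> M)" for u
  have p_in: "hat_edge u (p u) \<in> M" for u
    unfolding p_def by (rule theI') (rule partner)
  have "inj p"
  proof (rule injI)
    fix u u' assume "p u = p u'"
    then have "hat_edge u (p u) = hat_edge u' (p u')"
      using uniq[of "(p u, False)"] p_in[of u] p_in[of u'] by (metis in_hat_edge_False)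
    then show "u = u'" by simp
  qed
  then have "bij p" by (simp add: bij_def finite_UNIV_inj_surj)
  moreover have "M = perm_matching p"
  proof
    show "perm_matching p \<subseteq> M" using p_in by (auto simp: perm_matching_def)
    show "M \<subseteq> perm_matching p"
    proof
      fix e assume "e \<in> M"
      moreover obtain a b where ab: "e = hat_edge a b" using sub \<open>e \<in> M\<close> by auto
      ultimately have "b = p a" using partner[of a] p_in[of a] by metis
      with ab show "e \<in> perm_matching p" by (simp add: perm_matching_def)
    qed
  qed
  ultimately show ?thesis by (rule that)
qed

lemma card_perm_matching_red:
  "card (perm_matching p \<inter> hat_red UNIV (complete_edges UNIV)) = card {u. p u \<noteq> u}"
proof -
  have "perm_matching p \<inter> hat_red UNIV (complete_edges UNIV) = (\<lambda>u. hat_edge u (p u)) ` {u. p u \<noteq> u}"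
    unfolding perm_matching_def hat_red_complete by auto
  moreover have "inj_on (\<lambda>u. hat_edge u (p u)) {u. p u \<noteq> u}" by (auto intro: inj_onI)
  ultimately show ?thesis by (simp add: card_image)
qed

definition perm_vector :: "('v::finite \<Rightarrow> 'v) \<Rightarrow> 'v hvec" where
  "perm_vector p = incidence (perm_matching p)"

definition odd_perm_vectors :: "'v::finite hvec set" where
  "odd_perm_vectors = {perm_vector p | p. bij p \<and> odd (card {u. p u \<noteq> u})}"

lemma odd_pm_polytope_complete:
  "odd_pm_polytope UNIV (complete_edges UNIV) = convex hull (odd_perm_vectors :: 'v::finite hvec set)"
proof -
  let ?red = "hat_red UNIV (complete_edges (UNIV :: 'v set))"
  have "{incidence M | M. perfect_matching (hat_vertices UNIV) (hat_edges UNIV (complete_edges UNIV)) M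
          \<and> odd (card (M \<inter> ?red))} = odd_perm_vectors"
  proof (intro set_eqI iffI)
    fix x assume "x \<in> {incidence M | M. perfect_matching (hat_vertices UNIV)
        (hat_edges UNIV (complete_edges UNIV)) M \<and> odd (card (M \<inter> ?red))}"
    then obtain M where M: "x = incidence M" "odd (card (M \<inter> ?red))"
      and pm: "perfect_matching (hat_vertices UNIV) (hat_edges UNIV (complete_edges UNIV)) M"
      by blast
    obtain p where "bij p" "M = perm_matching p" using pm by (rule perfect_matching_imp_perm)
    with M show "x \<in> odd_perm_vectors"
      unfolding odd_perm_vectors_def perm_vector_def by (simp add: card_perm_matching_red) blast
  next
    fix x :: "'v hvec" assume "x \<in> odd_perm_vectors"
    then obtain p where p: "x = incidence (perm_matching p)" "bij p" "odd (card {u. p u \<noteq> u})"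
      unfolding odd_perm_vectors_def perm_vector_def by blast
    show "x \<in> {incidence M | M. perfect_matching (hat_vertices UNIV)
        (hat_edges UNIV (complete_edges UNIV)) M \<and> odd (card (M \<inter> ?red))}"
    proof (intro CollectI exI conjI)
      show "x = incidence (perm_matching p)" by (fact p(1))
      show "perfect_matching (hat_vertices UNIV) (hat_edges UNIV (complete_edges UNIV))
          (perm_matching p)"
        using p(2) by (rule perm_matching_perfect)
      show "odd (card (perm_matching p \<inter> ?red))" using p(3) by (simp add: card_perm_matching_red)
    qed
  qed
  then show ?thesis unfolding odd_pm_polytope_def by simp
qed

definition perm_cost :: "('v::finite \<Rightarrow> 'v \<Rightarrow> real) \<Rightarrow> ('v \<Rightarrow> 'v) \<Rightarrow> real" where
  "perm_cost L p = (\<Sum>u\<in>UNIV. L u (p u))"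

lemma inner_perm_vector: "z \<bullet> perm_vector p = perm_cost (\<lambda>u v. z $ hat_edge u v) p"
proof -
  have "z \<bullet> perm_vector p = (\<Sum>e\<in>perm_matching p. z $ e)"
    unfolding inner_vec_def perm_vector_def incidence_def
    by (simp add: if_distrib sum.If_cases Int_absorb1)
  also have "\<dots> = perm_cost (\<lambda>u v. z $ hat_edge u v) p"
    unfolding perm_matching_def perm_cost_def by (subst sum.reindex) (auto intro: inj_onI)
  finally show ?thesis .
qed

lemma perm_cost_eq_sum_support:
  assumes "{u. p u \<noteq> u} \<subseteq> S"
  shows "perm_cost L p = (\<Sum>u\<in>UNIV. L u u) + (\<Sum>u\<in>S. L u (p u) - L u u)"
proof -
  have "(\<Sum>u\<in>UNIV. L u (p u) - L u u) = (\<Sum>u\<in>S. L u (p u) - L u u)"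
  proof (rule sum.mono_neutral_right)
    show "\<forall>u\<in>UNIV - S. L u (p u) - L u u = 0"
    proof
      fix u assume "u \<in> UNIV - S"
      with assms have "p u = u" by blast
      then show "L u (p u) - L u u = 0" by simp
    qed
  qed auto
  then show ?thesis
    unfolding perm_cost_def by (simp add: sum_subtractf)
qed

lemma perm_cost_potential:
  fixes \<phi> :: "'v::finite \<Rightarrow> real"
  assumes "bij p"
  shows "perm_cost (\<lambda>u v. \<phi> v - \<phi> u) p = 0"
  using sum.reindex_bij_betw[of p UNIV UNIV \<phi>] assms
  by (simp add: perm_cost_def sum_subtractf bij_betw_def bij_def)

definition canon_weight :: "'v::finite set set \<Rightarrow> ('v set \<Rightarrow> real) \<Rightarrow> 'v hvec" where
  "canon_weight E a = (\<chi> i. \<Sum>e\<in>E. a e *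
     (of_bool (i = hat_edge (fst (endpts e)) (snd (endpts e)))
      + of_bool (i = hat_edge (snd (endpts e)) (fst (endpts e)))))"

lemma canon_lhs_eq_inner:
  fixes E :: "'v::finite set set"
  shows "canon_lhs E a y = canon_weight E a \<bullet> y"
proof -
  have "canon_weight E a \<bullet> y = (\<Sum>i\<in>UNIV. \<Sum>e\<in>E. a e *
     (of_bool (i = hat_edge (fst (endpts e)) (snd (endpts e))) * y $ i
      + of_bool (i = hat_edge (snd (endpts e)) (fst (endpts e))) * y $ i))"
    unfolding canon_weight_def inner_vec_def by (simp add: sum_distrib_left algebra_simps)
  also have "\<dots> = (\<Sum>e\<in>E. a e *
     (y $ hat_edge (fst (endpts e)) (snd (endpts e))
      + y $ hat_edge (snd (endpts e)) (fst (endpts e))))"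
    by (subst sum.swap) (simp add: sum_distrib_left[symmetric] sum.distrib)
  also have "\<dots> = canon_lhs E a y"
    unfolding canon_lhs_def hat_edge_def by (simp add: insert_commute)
  finally show ?thesis ..
qed

lemma endpts_complete_edge:
  assumes "e \<in> complete_edges UNIV"
  shows "e = {fst (endpts e), snd (endpts e)}" "fst (endpts e) \<noteq> snd (endpts e)"
proof -
  obtain u v where uv: "e = {u, v}" "u \<noteq> v"
    using assms unfolding complete_edges_def by blast
  then have "\<exists>p. e = {fst p, snd p}" by (intro exI[of _ "(u, v)"]) simp
  then show e: "e = {fst (endpts e), snd (endpts e)}"
    unfolding endpts_def by (rule someI_ex)
  with uv show "fst (endpts e) \<noteq> snd (endpts e)"
    by (metis doubleton_eq_iff insert_absorb2)
qed

lemma canon_weight_hat_edge: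
  "canon_weight (complete_edges UNIV) a $ hat_edge u v = (if u = v then 0 else a {u, v})"
proof -
  have summand: "a e * (of_bool (hat_edge u v = hat_edge (fst (endpts e)) (snd (endpts e)))
      + of_bool (hat_edge u v = hat_edge (snd (endpts e)) (fst (endpts e))))
    = (if u \<noteq> v \<and> e = {u, v} then a e else 0)" if "e \<in> complete_edges UNIV" for e
  proof -
    define x y where "x = fst (endpts e)" and "y = snd (endpts e)"
    have "e = {x, y}" "x \<noteq> y"
      using endpts_complete_edge[OF that] by (simp_all add: x_def y_def)
    then show ?thesis
      unfolding x_def[symmetric] y_def[symmetric] by (auto simp: doubleton_eq_iff)
  qed
  show ?thesis
    unfolding canon_weight_def using summand
    by (simp add: sum.delta' cong: sum.cong)
qed

lemma canon_lhs_perm_vector: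
  "canon_lhs (complete_edges UNIV) a (perm_vector p)
    = perm_cost (\<lambda>u v. if u = v then 0 else a {u, v}) p"
  unfolding canon_lhs_eq_inner inner_perm_vector canon_weight_hat_edge ..

section \<open>Cyclic permutations and odd arcs\<close>

definition cycle_weight :: "('v \<Rightarrow> 'v \<Rightarrow> real) \<Rightarrow> 'v list \<Rightarrow> real" where
  "cycle_weight L cs = (\<Sum>(u, v)\<leftarrow>zip cs (rotate1 cs). L u v)"

lemma bij_cycle_of_list: "bij (cycle_of_list cs)"
  using permutation_bijective[OF permutation_of_cycle] .

lemma map_cycle_of_list: "distinct cs \<Longrightarrow> map (cycle_of_list cs) cs = rotate1 cs"
  using cyclic_rotation[of cs 1] by simp

lemma cycle_of_list_support:
  assumes "distinct cs" "2 \<le> length cs"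
  shows "{u. cycle_of_list cs u \<noteq> u} = set cs"
proof
  show "{u. cycle_of_list cs u \<noteq> u} \<subseteq> set cs" using id_outside_supp by fastforce
  show "set cs \<subseteq> {u. cycle_of_list cs u \<noteq> u}"
  proof
    fix u assume "u \<in> set cs"
    then obtain i where i: "i < length cs" "u = cs ! i" by (auto simp: in_set_conv_nth)
    have "cycle_of_list cs u = cs ! (Suc i mod length cs)"
      using arg_cong[OF map_cycle_of_list[OF assms(1)], of "\<lambda>xs. xs ! i"] i
        by (simp add: nth_rotate1)
    moreover have "Suc i mod length cs \<noteq> i" using i assms(2) by (cases "Suc i = length cs") auto
    moreover have "Suc i mod length cs < length cs" by (rule mod_less_divisor) (use i(1) in auto)
    ultimately show "u \<in> {u. cycle_of_list cs u \<noteq> u}" using assms(1) i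
      by (simp add: nth_eq_iff_index_eq)
  qed
qed

lemma perm_cost_cycle_of_list:
  fixes L :: "'v::finite \<Rightarrow> 'v \<Rightarrow> real"
  assumes "distinct cs"
  shows "perm_cost L (cycle_of_list cs) = (\<Sum>u\<in>UNIV. L u u) + cycle_weight (\<lambda>u v. L u v - L u u) cs"
proof -
  have "perm_cost L (cycle_of_list cs)
      = (\<Sum>u\<in>UNIV. L u u) + (\<Sum>u\<in>set cs. L u (cycle_of_list cs u) - L u u)"
    by (rule perm_cost_eq_sum_support) (use id_outside_supp in fastforce)
  also have "(\<Sum>u\<in>set cs. L u (cycle_of_list cs u) - L u u)
      = (\<Sum>(u, v)\<leftarrow>zip cs (map (cycle_of_list cs) cs). L u v - L u u)"
    using assms
      by (simp add: sum_list_distinct_conv_sum_set[symmetric] zip_map2 zip_same_conv_map comp_def)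
  finally show ?thesis unfolding cycle_weight_def map_cycle_of_list[OF assms] .
qed

definition odd_arc :: "nat \<Rightarrow> nat \<Rightarrow> nat \<Rightarrow> nat" where
  "odd_arc m i j = (let d = nat \<bar>int j - int i\<bar> in if odd d then d else m - d)"

lemma odd_arc_sym: "odd_arc m i j = odd_arc m j i"
  unfolding odd_arc_def by (simp add: abs_minus_commute)

lemma odd_arc_less: "i < j \<Longrightarrow> odd_arc m i j = (if odd (j - i) then j - i else m - (j - i))"
  unfolding odd_arc_def by (simp add: nat_diff_distrib)

lemma odd_arc_ge_1: "i \<in> {1..m} \<Longrightarrow> j \<in> {1..m} \<Longrightarrow> i \<noteq> j \<Longrightarrow> 1 \<le> odd_arc m i j"
  unfolding odd_arc_def Let_def by (auto split: if_splits)

lemma odd_arc_lift: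
  assumes "odd m" "i \<in> {1..m}" "j \<in> {1..m}" "i \<noteq> j"
  obtains w :: int where "\<bar>w\<bar> = int (odd_arc m i j)" "odd w" "int m dvd w - (int j - int i)"
proof -
  define D where "D = int j - int i"
  have D: "D \<noteq> 0" "D < int m" "- D < int m" using assms(2-4) unfolding D_def by auto
  have arc: "int (odd_arc m i j) = (if odd D then \<bar>D\<bar> else int m - \<bar>D\<bar>)"
    using D unfolding odd_arc_def Let_def D_def[symmetric] by (auto simp: even_nat_iff)
  show ?thesis
  proof (cases "odd D")
    case True
    then show ?thesis by (intro that[of D]) (simp_all add: arc D_def)
  next
    case False
    let ?w = "if 0 < D then D - int m else D + int m"
    show ?thesis by (rule that[of ?w]) (use False D assms(1) in \<open>auto simp: arc D_def\<close>)
  qed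
qed

lemma sum_odd_arc_ge:
  fixes \<sigma> :: "nat \<Rightarrow> nat"
  assumes m: "odd m" and \<sigma>: "bij_betw \<sigma> {1..m} {1..m}" and odd_moved: "odd (card {i\<in>{1..m}. \<sigma> i \<noteq> i})"
  shows "m \<le> (\<Sum>i\<in>{1..m}. if \<sigma> i = i then 0 else odd_arc m i (\<sigma> i))"
proof -
  let ?I = "{1..m}" and ?arc = "\<lambda>i. if \<sigma> i = i then 0 else odd_arc m i (\<sigma> i)"
  have "\<exists>w::int. \<bar>w\<bar> = int (?arc i) \<and> (odd w \<longleftrightarrow> \<sigma> i \<noteq> i) \<and> int m dvd w - (int (\<sigma> i) - int i)"
    if i: "i \<in> ?I" for i
  proof (cases "\<sigma> i = i")
    case False
    obtain w :: int where "\<bar>w\<bar> = int (odd_arc m i (\<sigma> i))" "odd w" "int m dvd w - (int (\<sigma> i) - int i)"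
      using odd_arc_lift[OF m i bij_betw_apply[OF \<sigma> i]] False by metis
    with False show ?thesis by auto
  qed simp
  then obtain w :: "nat \<Rightarrow> int" where
    w: "\<And>i. i \<in> ?I \<Longrightarrow> \<bar>w i\<bar> = int (?arc i) \<and> (odd (w i) \<longleftrightarrow> \<sigma> i \<noteq> i)
                            \<and> int m dvd w i - (int (\<sigma> i) - int i)"
    by metis
  have "(\<Sum>i\<in>?I. int (\<sigma> i)) = (\<Sum>i\<in>?I. int i)"
    using sum.reindex_bij_betw[OF \<sigma>, of int] by simp
  then have "(\<Sum>i\<in>?I. w i) = (\<Sum>i\<in>?I. w i - (int (\<sigma> i) - int i))"
    by (simp add: sum_subtractf)
  also have "int m dvd \<dots>" using w by (intro dvd_sum) blast
  finally have dvd: "int m dvd (\<Sum>i\<in>?I. w i)" .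
  have "{i\<in>?I. odd (w i)} = {i\<in>?I. \<sigma> i \<noteq> i}" using w by blast
  then have "odd (\<Sum>i\<in>?I. w i)" using odd_moved by (simp add: even_sum_iff)
  then have "(\<Sum>i\<in>?I. w i) \<noteq> 0" by auto
  then have "int m \<le> \<bar>\<Sum>i\<in>?I. w i\<bar>" using dvd_imp_le_int[OF _ dvd] by simp
  also have "\<dots> \<le> (\<Sum>i\<in>?I. \<bar>w i\<bar>)" by (rule sum_abs)
  also have "\<dots> = int (\<Sum>i\<in>?I. ?arc i)" using w by (simp add: of_nat_sum)
  finally show ?thesis by linarith
qed

section \<open>Additive functions on the chords of an odd cycle\<close>

lemma odd_gap_shift_invariant:
  fixes \<delta> :: "nat \<Rightarrow> nat \<Rightarrow> real"
  assumes adjacent: "\<And>i. 1 \<le> i \<Longrightarrow> i < m \<Longrightarrow> \<delta> i (i + 1) = 0"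
    and additive: "\<And>a b d. 1 \<le> a \<Longrightarrow> a < b \<Longrightarrow> b < d \<Longrightarrow> d \<le> m \<Longrightarrow> odd (b - a) \<Longrightarrow> odd (d - b)
                     \<Longrightarrow> \<delta> a d = \<delta> a b + \<delta> b d"
    and "odd g" "1 \<le> i" "i + g \<le> m"
  shows "\<delta> i (i + g) = \<delta> 1 (1 + g)"
  using \<open>1 \<le> i\<close> \<open>i + g \<le> m\<close>
proof (induction i rule: dec_induct)
  case (step i)
  have "1 \<le> g" using \<open>odd g\<close> by presburger
  \<comment> \<open>split the even gap from i to i + 1 + g at both i + 1 and i + g\<close>
  have "\<delta> i (i + 1) + \<delta> (i + 1) (i + 1 + g) = \<delta> i (i + g) + \<delta> (i + g) (i + g + 1)"
    using additive[of i "i + 1" "i + 1 + g"] additive[of i "i + g" "i + 1 + g"] step \<open>odd g\<close> \<open>1 \<le> g\<close>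
    by (simp add: add.commute add.left_commute)
  with step adjacent[of i] adjacent[of "i + g"] show ?case by simp
qed simp

lemma odd_gap_linear:
  fixes \<delta> :: "nat \<Rightarrow> nat \<Rightarrow> real" and q :: nat
  assumes "odd m"
    and adjacent: "\<And>i. 1 \<le> i \<Longrightarrow> i < m \<Longrightarrow> \<delta> i (i + 1) = 0"
    and additive: "\<And>a b d. 1 \<le> a \<Longrightarrow> a < b \<Longrightarrow> b < d \<Longrightarrow> d \<le> m \<Longrightarrow> odd (b - a) \<Longrightarrow> odd (d - b)
                     \<Longrightarrow> \<delta> a d = \<delta> a b + \<delta> b d"
    and "2 * q + 2 \<le> m"
  shows "\<delta> 1 (2 * q + 2) = q * \<delta> 1 4"
  using \<open>2 * q + 2 \<le> m\<close>
proof (induction q)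
  case 0
  then show ?case using adjacent[of 1] by simp
next
  case (Suc q)
  have "2 * q + 5 \<le> m" using Suc.prems \<open>odd m\<close> by presburger
  have shift: "\<delta> a (a + g) = \<delta> 1 (1 + g)" if "odd g" "1 \<le> a" "a + g \<le> m" for a g
    using adjacent additive that by (rule odd_gap_shift_invariant)
  \<comment> \<open>split the even gap from 1 to 2 q + 5 once at 2 and once at 2 q + 2\<close>
  have A: "\<delta> 1 (2 * q + 5) = \<delta> 1 2 + \<delta> 2 (2 * q + 5)"
    by (rule additive) (use \<open>2 * q + 5 \<le> m\<close> in simp_all)
  have B: "\<delta> 1 (2 * q + 5) = \<delta> 1 (2 * q + 2) + \<delta> (2 * q + 2) (2 * q + 5)"
    by (rule additive) (use \<open>2 * q + 5 \<le> m\<close> in simp_all)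
  have "\<delta> 2 (2 + (2 * q + 3)) = \<delta> 1 (1 + (2 * q + 3))"
    by (rule shift) (use \<open>2 * q + 5 \<le> m\<close> in simp_all)
  moreover have "2 + (2 * q + 3) = 2 * q + 5" "1 + (2 * q + 3) = 2 * Suc q + 2" by simp_all
  ultimately have C: "\<delta> 2 (2 * q + 5) = \<delta> 1 (2 * Suc q + 2)" by metis
  have "\<delta> (2 * q + 2) ((2 * q + 2) + 3) = \<delta> 1 (1 + 3)"
    by (rule shift) (use \<open>2 * q + 5 \<le> m\<close> in simp_all)
  moreover have "(2 * q + 2) + 3 = 2 * q + 5" "1 + 3 = (4::nat)" by simp_all
  ultimately have D: "\<delta> (2 * q + 2) (2 * q + 5) = \<delta> 1 4" by metis
  have "\<delta> 1 (1 + 1) = 0" by (rule adjacent) (use \<open>2 * q + 5 \<le> m\<close> in simp_all)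
  then have E: "\<delta> 1 2 = 0" by (metis one_add_one)
  have IH: "\<delta> 1 (2 * q + 2) = q * \<delta> 1 4" using Suc.IH \<open>2 * q + 5 \<le> m\<close> by simp
  have "real (Suc q) * \<delta> 1 4 = real q * \<delta> 1 4 + \<delta> 1 4" by (simp add: algebra_simps)
  with IH A B C D E show ?case by linarith
qed

lemma odd_cycle_additive_zero:
  fixes \<delta> :: "nat \<Rightarrow> nat \<Rightarrow> real"
  assumes "odd m"
    and adjacent: "\<And>i. 1 \<le> i \<Longrightarrow> i < m \<Longrightarrow> \<delta> i (i + 1) = 0"
    and wrap: "\<delta> 1 m = 0"
    and additive: "\<And>a b d. 1 \<le> a \<Longrightarrow> a < b \<Longrightarrow> b < d \<Longrightarrow> d \<le> m \<Longrightarrow> odd (b - a) \<Longrightarrow> odd (d - b)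
                     \<Longrightarrow> \<delta> a d = \<delta> a b + \<delta> b d"
    and ij: "1 \<le> i" "i < j" "j \<le> m"
  shows "\<delta> i j = 0"
proof -
  define r where "r = (m - 3) div 2"
  have r: "m = 2 * r + 3" using \<open>odd m\<close> ij unfolding r_def by presburger
  have shift: "\<delta> a (a + g) = \<delta> 1 (1 + g)" if "odd g" "1 \<le> a" "a + g \<le> m" for a g
    using adjacent additive that by (rule odd_gap_shift_invariant)
  have linear: "\<delta> 1 (2 * q + 2) = q * \<delta> 1 4" if "2 * q + 2 \<le> m" for q
    using \<open>odd m\<close> adjacent additive that by (rule odd_gap_linear)
  have split: "\<delta> 1 m = \<delta> 1 2 + \<delta> 2 m"
    by (rule additive) (use r in simp_all)
  have shifted: "\<delta> 2 m = \<delta> 1 (2 * r + 2)"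
  proof -
    have "\<delta> 2 (2 + (2 * r + 1)) = \<delta> 1 (1 + (2 * r + 1))" by (rule shift) (use r in simp_all)
    moreover have "2 + (2 * r + 1) = m" "1 + (2 * r + 1) = 2 * r + 2" using r by simp_all
    ultimately show ?thesis by metis
  qed
  have "\<delta> 1 (1 + 1) = 0" by (rule adjacent) (use r in simp_all)
  then have first: "\<delta> 1 2 = 0" by (metis one_add_one)
  have "2 * r + 2 \<le> m" using r by simp
  then have "\<delta> 1 (2 * r + 2) = r * \<delta> 1 4" by (rule linear)
  with split shifted first wrap have "r * \<delta> 1 4 = 0" by linarith
  have odd_gap_zero: "\<delta> a (a + g) = 0" if "odd g" "1 \<le> a" "a + g \<le> m" for a g
  proof -
    obtain q where q: "g = 2 * q + 1" using \<open>odd g\<close> by (rule oddE)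
    have "\<delta> a (a + g) = q * \<delta> 1 4" using shift[OF that] linear[of q] that q by simp
    moreover have "q = 0" if "r = 0" using q \<open>1 \<le> a\<close> \<open>a + g \<le> m\<close> r that by simp
    ultimately show ?thesis using \<open>r * \<delta> 1 4 = 0\<close> by auto
  qed
  show ?thesis
  proof (cases "odd (j - i)")
    case True
    then show ?thesis using odd_gap_zero[of "j - i" i] ij by simp
  next
    case False
    then have gap: "odd (j - (i + 1))" "i + 1 < j" using ij by presburger+
    then have "\<delta> i j = \<delta> i (i + 1) + \<delta> (i + 1) ((i + 1) + (j - (i + 1)))"
      using additive[of i "i + 1" j] ij by simp
    also have "\<dots> = 0" using adjacent[of i] odd_gap_zero[of "j - (i + 1)" "i + 1"] gap ij by simp
    finally show ?thesis .
  qed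
qed

lemma alternating_odd_cycle_zero:
  fixes f :: "nat \<Rightarrow> real"
  assumes "odd m"
    and alternate: "\<And>i. 1 \<le> i \<Longrightarrow> i < m \<Longrightarrow> f (i + 1) = - f i"
    and wrap: "f 1 = - f m"
    and i: "1 \<le> i" "i \<le> m"
  shows "f i = 0"
proof -
  have power: "f i = (-1) ^ (i - 1) * f 1" if "1 \<le> i" "i \<le> m" for i
    using that
  proof (induction i rule: dec_induct)
    case (step i)
    then show ?case using alternate[of i] by (cases i) auto
  qed simp
  have "f m = f 1" using power[of m] i \<open>odd m\<close> by simp
  with wrap have "f 1 = 0" by simp
  then show ?thesis using power[OF i] by simp
qed

section \<open>Facets of convex hulls\<close>

lemma subset_affine_hull_if_functionals_agree:
  fixes S T :: "'a::euclidean_space set"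
  assumes "x0 \<in> T"
    and agree: "\<And>z y. (\<And>x. x \<in> T \<Longrightarrow> z \<bullet> x = z \<bullet> x0) \<Longrightarrow> y \<in> S \<Longrightarrow> z \<bullet> y = z \<bullet> x0"
  shows "S \<subseteq> affine hull T"
proof
  define D where "D = {x - x0 | x. x \<in> T - {x0}}"
  fix y assume "y \<in> S"
  have "y - x0 \<in> span D"
  proof (rule ccontr)
    assume y_out: "y - x0 \<notin> span D"
    have "span D \<subset> span (insert (y - x0) D)"
    proof
      show "span D \<subseteq> span (insert (y - x0) D)" by (rule span_mono) blast
      show "span D \<noteq> span (insert (y - x0) D)"
        using y_out span_base[of "y - x0" "insert (y - x0) D"] by blast
    qed
    then obtain z where z: "z \<noteq> 0" "z \<in> span (insert (y - x0) D)" "\<And>v. v \<in> span D \<Longrightarrow> orthogonal z v"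
      by (rule orthogonal_to_subspace_exists_gen) blast
    have "z \<bullet> x = z \<bullet> x0" if "x \<in> T" for x
    proof (cases "x = x0")
      case False
      then have "x - x0 \<in> D" unfolding D_def using that by blast
      then have "orthogonal z (x - x0)" using z(3) span_base by blast
      then show ?thesis unfolding orthogonal_def by (simp add: inner_diff_right)
    qed simp
    then have "z \<bullet> y = z \<bullet> x0" using agree \<open>y \<in> S\<close> by blast
    then have "orthogonal z (y - x0)" unfolding orthogonal_def by (simp add: inner_diff_right)
    then have "orthogonal z v" if "v \<in> insert (y - x0) D" for v
      using that z(3) span_base by blast
    then have "orthogonal z z" by (intro orthogonal_to_span[OF z(2)])
    with z(1) show False by (simp add: orthogonal_self)
  qed
  then show "y \<in> affine hull T"
    unfolding affine_hull_span[OF \<open>x0 \<in> T\<close>] D_def by (intro CollectI exI[of _ "y - x0"]) simp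
qed

lemma convex_hull_halfspace_ge:
  assumes "\<And>x. x \<in> V \<Longrightarrow> b \<le> w \<bullet> x" and "y \<in> convex hull V"
  shows "b \<le> w \<bullet> y"
proof -
  have "convex hull V \<subseteq> {x. b \<le> w \<bullet> x}"
    by (rule hull_minimal) (use assms(1) convex_halfspace_ge[of b w] in auto)
  with assms(2) show ?thesis by blast
qed

lemma facet_of_convex_hull_hyperplane:
  fixes V T :: "'a::euclidean_space set"
  assumes ge: "\<And>x. x \<in> V \<Longrightarrow> b \<le> w \<bullet> x"
    and T: "T \<subseteq> V" "T \<noteq> {}" "\<And>x. x \<in> T \<Longrightarrow> w \<bullet> x = b"
    and y: "y \<in> V" "w \<bullet> y \<noteq> b"
    and V_hull: "V \<subseteq> affine hull (insert y T)"
  shows "convex hull V \<inter> {x. w \<bullet> x = b} facet_of convex hull V"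
proof -
  let ?P = "convex hull V" and ?F = "convex hull V \<inter> {x. w \<bullet> x = b}"
  have V_P: "V \<subseteq> ?P" by (rule hull_subset)
  have face: "?F face_of ?P"
    using convex_hull_halfspace_ge[OF ge]
      by (intro face_of_Int_supporting_hyperplane_ge convex_convex_hull)
  have T_F: "T \<subseteq> ?F" using T(1,3) V_P by blast
  have "y \<in> ?P - ?F" using y V_P by blast
  then have "aff_dim ?F < aff_dim ?P" by (intro face_of_aff_dim_lt[OF _ face]) auto
  moreover have "aff_dim ?P \<le> aff_dim ?F + 1"
  proof -
    have "aff_dim ?P = aff_dim V" by (rule aff_dim_convex_hull)
    also have "\<dots> \<le> aff_dim (affine hull (insert y T))" using V_hull by (rule aff_dim_subset)
    also have "\<dots> \<le> aff_dim T + 1" by (simp add: aff_dim_insert)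
    also have "\<dots> \<le> aff_dim ?F + 1" using aff_dim_subset[OF T_F] by simp
    finally show ?thesis .
  qed
  moreover have "?F \<noteq> {}" using T_F T(2) by blast
  ultimately show ?thesis unfolding facet_of_def using face by simp
qed

section \<open>The C-induced constraint on the complete graph\<close>

locale C_induced_setup =
  fixes n k :: nat and c :: "nat \<Rightarrow> 'v::finite" and s t :: 'v
  assumes card_UNIV: "CARD('v) = n" and n_ge_5: "n \<ge> 5" and odd_n: "odd n"
    and k_def: "k = (n - 3) div 2" and inj_c: "inj_on c {1..2*k+1}" and s_ne_t: "s \<noteq> t"
    and s_notin_C: "s \<notin> c ` {1..2*k+1}" and t_notin_C: "t \<notin> c ` {1..2*k+1}"
begin

abbreviation "m \<equiv> 2 * k + 1"
abbreviation "I \<equiv> {1..m}"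
abbreviation "C \<equiv> c ` I"

lemma k_ge_1: "1 \<le> k"
  using n_ge_5 odd_n k_def by presburger

lemma UNIV_eq: "UNIV = insert s (insert t C)"
proof -
  have "card (insert s (insert t C)) = m + 2"
    using s_notin_C t_notin_C s_ne_t inj_c by (simp add: card_image)
  also have "\<dots> = card (UNIV :: 'v set)"
    using card_UNIV n_ge_5 odd_n k_def by presburger
  finally show ?thesis by (intro card_subset_eq[symmetric]) auto
qed

lemma in_C_iff: "u \<in> C \<longleftrightarrow> u \<noteq> s \<and> u \<noteq> t"
  using UNIV_eq s_notin_C t_notin_C by blast

lemma c_ne_terminal [simp]:
  "i \<in> I \<Longrightarrow> c i \<noteq> s" "i \<in> I \<Longrightarrow> c i \<noteq> t" "i \<in> I \<Longrightarrow> s \<noteq> c i" "i \<in> I \<Longrightarrow> t \<noteq> c i"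
  using s_notin_C t_notin_C by blast+

lemma c_eq_iff [simp]: "i \<in> I \<Longrightarrow> j \<in> I \<Longrightarrow> c i = c j \<longleftrightarrow> i = j"
  using inj_c by (auto dest: inj_onD)

lemma vertex_pair_induct:
  assumes sym: "\<And>u v. P u v \<Longrightarrow> P v u" and diag: "\<And>u. P u u"
    and terminals: "P s t"
    and terminal_cycle: "\<And>x i. x \<in> {s, t} \<Longrightarrow> i \<in> I \<Longrightarrow> P x (c i)"
    and cycle: "\<And>i j. 1 \<le> i \<Longrightarrow> i < j \<Longrightarrow> j \<le> m \<Longrightarrow> P (c i) (c j)"
  shows "P u v"
proof -
  have cycle': "P (c i) (c j)" if "i \<in> I" "j \<in> I" for i j
    using cycle[of i j] cycle[of j i] sym diag that by (cases i j rule: linorder_cases) auto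
  have terminal: "P x w" if "x \<in> {s, t}" for x w
  proof -
    consider "w \<in> {s, t}" | i where "i \<in> I" "w = c i" using UNIV_eq by blast
    then show ?thesis
    proof cases
      case 1
      with that show ?thesis using terminals sym diag by auto
    next
      case 2
      with that show ?thesis using terminal_cycle by simp
    qed
  qed
  consider "u \<in> {s, t}" | "v \<in> {s, t}" | i j where "i \<in> I" "j \<in> I" "u = c i" "v = c j"
    using UNIV_eq by blast
  then show ?thesis
    by cases (use terminal sym cycle' in auto)
qed

definition weight :: "'v \<Rightarrow> 'v \<Rightarrow> real" where
  "weight u v = (if u = v then 0 else C_induced_coeff UNIV (complete_edges UNIV) c k s t {u, v})"

lemma canon_lhs_C_induced:
  "canon_lhs (complete_edges UNIV) (C_induced_coeff UNIV (complete_edges UNIV) c k s t) (perm_vector p)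
    = perm_cost weight p"
  unfolding canon_lhs_perm_vector weight_def ..

lemma weight_diag [simp]: "weight u u = 0"
  unfolding weight_def by simp

lemma weight_sym: "weight u v = weight v u"
  unfolding weight_def by (simp add: insert_commute)

lemma weight_terminals: "weight s t = 1"
proof -
  have "{s, t} \<notin> cut_edges (complete_edges UNIV) C"
    unfolding cut_edges_def using s_notin_C t_notin_C by auto
  moreover have "{s, t} \<notin> induced_edges (complete_edges UNIV) (UNIV - {s, t})"
    unfolding induced_edges_def by auto
  ultimately show ?thesis unfolding weight_def C_induced_coeff_def using s_ne_t by simp
qed

lemma weight_terminal_cycle:
  assumes "x \<in> {s, t}" "u \<in> C"
  shows "weight x u = k"
proof -
  have "x \<noteq> u" "x \<notin> C" "u \<noteq> s" "u \<noteq> t" using assms s_notin_C t_notin_C by auto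
  then have "{x, u} \<noteq> {s, t}" "{x, u} \<inter> C = {u}" using assms by (auto simp: doubleton_eq_iff)
  then have "{x, u} \<in> cut_edges (complete_edges UNIV) C" "{x, u} \<noteq> {s, t}"
    unfolding cut_edges_def using \<open>x \<noteq> u\<close> by auto
  moreover have "{x, u} \<notin> induced_edges (complete_edges UNIV) (UNIV - {s, t})"
    unfolding induced_edges_def using assms by auto
  ultimately show ?thesis unfolding weight_def C_induced_coeff_def using \<open>x \<noteq> u\<close> by simp
qed

lemma ell_cycle:
  assumes "i \<in> I" "j \<in> I" "i \<noteq> j"
  shows "ell c k {c i, c j} = odd_arc m i j"
proof -
  define P where "P q \<longleftrightarrow> fst q \<in> I \<and> snd q \<in> I \<and> fst q \<noteq> snd q \<and> {c i, c j} = {c (fst q), c (snd q)}"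
    for q :: "nat \<times> nat"
  define q where "q = (SOME q. P q)"
  have "P (i, j)" unfolding P_def using assms by auto
  then have "P q" unfolding q_def by (rule someI)
  then have "q = (i, j) \<or> q = (j, i)"
    unfolding P_def using assms by (auto simp: doubleton_eq_iff prod_eq_iff)
  moreover have "ell c k {c i, c j} = odd_arc m (fst q) (snd q)"
    unfolding ell_def odd_arc_def P_def[symmetric] q_def[symmetric] by (simp only: Let_def)
  ultimately show ?thesis using odd_arc_sym by auto
qed

lemma weight_cycle:
  assumes "i \<in> I" "j \<in> I" "i \<noteq> j"
  shows "weight (c i) (c j) = odd_arc m i j"
proof -
  have "c i \<noteq> c j" "{c i, c j} \<noteq> {s, t}" using assms by (auto simp: doubleton_eq_iff)
  moreover have "{c i, c j} \<notin> cut_edges (complete_edges UNIV) C"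
    unfolding cut_edges_def using assms \<open>c i \<noteq> c j\<close> by (auto simp: Int_absorb2)
  moreover have "{c i, c j} \<in> induced_edges (complete_edges UNIV) (UNIV - {s, t})"
    unfolding induced_edges_def using assms \<open>c i \<noteq> c j\<close> by auto
  ultimately show ?thesis unfolding weight_def C_induced_coeff_def using ell_cycle[OF assms] by simp
qed

lemma weight_ge_1: "u \<noteq> v \<Longrightarrow> 1 \<le> weight u v"
proof -
  have "u \<noteq> v \<longrightarrow> 1 \<le> weight u v"
  proof (rule vertex_pair_induct)
    fix x i assume "x \<in> {s, t}" "i \<in> I"
    then show "x \<noteq> c i \<longrightarrow> 1 \<le> weight x (c i)" using weight_terminal_cycle[of x "c i"] k_ge_1 by simp
  next
    fix i j assume "1 \<le> i" "i < j" "j \<le> m"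
    then show "c i \<noteq> c j \<longrightarrow> 1 \<le> weight (c i) (c j)" using weight_cycle[of i j] odd_arc_ge_1[of i m j]
      by simp
  qed (use weight_sym weight_terminals in auto)
  then show "u \<noteq> v \<Longrightarrow> 1 \<le> weight u v" by simp
qed

lemma weight_nonneg: "0 \<le> weight u v"
  using weight_ge_1[of u v] by (cases "u = v") simp_all

lemma cycle_invariant_cost_ge:
  assumes p: "bij p" and C_inv: "p ` C \<subseteq> C" and odd_moved: "odd (card {u\<in>C. p u \<noteq> u})"
  shows "m \<le> (\<Sum>u\<in>C. weight u (p u))"
proof -
  have "p ` C = C"
    using C_inv by (intro endo_inj_surj) (auto intro: inj_on_subset[OF bij_is_inj[OF p]])
  then have pC: "bij_betw p C C"
    using p by (auto simp: bij_betw_def intro: inj_on_subset[OF bij_is_inj[OF p]])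
  have cI: "bij_betw c I C" using inj_c by (simp add: bij_betw_def)
  define \<sigma> where "\<sigma> = the_inv_into I c \<circ> p \<circ> c"
  have \<sigma>: "bij_betw \<sigma> I I"
    unfolding \<sigma>_def
      by (intro bij_betw_trans[OF cI] bij_betw_trans[OF pC] bij_betw_the_inv_into[OF cI])
  have c_\<sigma>: "c (\<sigma> i) = p (c i)" if "i \<in> I" for i
  proof -
    have "p (c i) \<in> C" using that C_inv by blast
    then show ?thesis unfolding \<sigma>_def comp_def by (rule f_the_inv_into_f[OF inj_c])
  qed
  have "p (c i) \<noteq> c i \<longleftrightarrow> \<sigma> i \<noteq> i" if "i \<in> I" for i
    using c_\<sigma>[OF that] bij_betw_apply[OF \<sigma> that] that by auto
  then have "{u\<in>C. p u \<noteq> u} = c ` {i\<in>I. \<sigma> i \<noteq> i}" by auto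
  moreover have "inj_on c {i\<in>I. \<sigma> i \<noteq> i}" by (rule inj_on_subset[OF inj_c]) auto
  ultimately have moved: "card {u\<in>C. p u \<noteq> u} = card {i\<in>I. \<sigma> i \<noteq> i}"
    by (simp add: card_image)
  have "odd (card {i\<in>I. \<sigma> i \<noteq> i})" using moved odd_moved by simp
  then have "m \<le> (\<Sum>i\<in>I. if \<sigma> i = i then 0 else odd_arc m i (\<sigma> i))"
    by (intro sum_odd_arc_ge[OF _ \<sigma>]) simp_all
  then have "real m \<le> real (\<Sum>i\<in>I. if \<sigma> i = i then 0 else odd_arc m i (\<sigma> i))"
    by (simp only: of_nat_le_iff)
  also have "\<dots> = (\<Sum>i\<in>I. weight (c i) (c (\<sigma> i)))"
    unfolding of_nat_sum
  proof (rule sum.cong)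
    fix i assume "i \<in> I"
    then show "real (if \<sigma> i = i then 0 else odd_arc m i (\<sigma> i)) = weight (c i) (c (\<sigma> i))"
      using weight_cycle[OF \<open>i \<in> I\<close> bij_betw_apply[OF \<sigma> \<open>i \<in> I\<close>]] by auto
  qed simp
  also have "\<dots> = (\<Sum>u\<in>C. weight u (p u))"
    unfolding sum.reindex[OF inj_c] comp_def by (rule sum.cong) (simp_all add: c_\<sigma>)
  finally show ?thesis .
qed

lemma sum_weight_le_perm_cost: "(\<Sum>u\<in>S. weight u (p u)) \<le> perm_cost weight p"
  unfolding perm_cost_def by (rule sum_mono2) (simp_all add: weight_nonneg)

lemma odd_moved_on_invariant_cycle:
  assumes p: "bij p" and C_inv: "p ` C \<subseteq> C" and odd_moved: "odd (card {u. p u \<noteq> u})"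
  shows "odd (card {u\<in>C. p u \<noteq> u})"
proof -
  have "p ` C = C"
    using C_inv by (intro endo_inj_surj) (auto intro: inj_on_subset[OF bij_is_inj[OF p]])
  moreover have "- C = {s, t}" using in_C_iff by auto
  ultimately have "p ` {s, t} = {s, t}" using bij_image_Compl_eq[OF p, of C] by simp
  then have "(p s = s \<and> p t = t) \<or> (p s = t \<and> p t = s)" by (simp add: doubleton_eq_iff)
  then have even: "even (card {u\<in>{s, t}. p u \<noteq> u})"
  proof (elim disjE conjE)
    assume "p s = s" "p t = t"
    then have "{u\<in>{s, t}. p u \<noteq> u} = {}" by auto
    then show ?thesis by (simp only:) simp
  next
    assume "p s = t" "p t = s"
    then have "{u\<in>{s, t}. p u \<noteq> u} = {s, t}" using s_ne_t by auto
    then show ?thesis by (simp only:) (simp add: s_ne_t)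
  qed
  have "{u. p u \<noteq> u} = {u\<in>C. p u \<noteq> u} \<union> {u\<in>{s, t}. p u \<noteq> u}" using in_C_iff by auto
  moreover have "{u\<in>C. p u \<noteq> u} \<inter> {u\<in>{s, t}. p u \<noteq> u} = {}" using in_C_iff by auto
  ultimately have "card {u. p u \<noteq> u} = card {u\<in>C. p u \<noteq> u} + card {u\<in>{s, t}. p u \<noteq> u}"
    by (simp add: card_Un_disjoint)
  with odd_moved even show ?thesis by simp
qed

lemma perm_cost_ge_leaving_cycle:
  assumes p: "bij p" and leaves: "\<not> p ` C \<subseteq> C" and odd_moved: "odd (card {u. p u \<noteq> u})"
  shows "m \<le> perm_cost weight p"
proof -
  obtain u where "u \<in> C" "p u \<notin> C" using leaves by blast
  then have u: "u \<in> C" "p u \<in> {s, t}" using in_C_iff by auto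
  have "\<not> p ` {s, t} \<subseteq> {s, t}"
  proof
    assume st_inv: "p ` {s, t} \<subseteq> {s, t}"
    have "inj_on p {s, t}" using bij_is_inj[OF p] by (rule inj_on_subset) simp
    then have "p ` {s, t} = {s, t}" by (intro endo_inj_surj st_inv) simp_all
    then have "p u \<in> p ` {s, t}" using u(2) by simp
    then have "u \<in> {s, t}" using inj_image_mem_iff[OF bij_is_inj[OF p]] by blast
    with u(1) show False using in_C_iff by auto
  qed
  then obtain x where x: "x \<in> {s, t}" "p x \<in> C" using in_C_iff by auto
  have "x \<notin> C" "p u \<notin> C" using x(1) u(2) in_C_iff by auto
  then have moved: "x \<noteq> u" "p x \<noteq> x" "p u \<noteq> u" using x(2) u(1) by metis+
  have "{x, u} \<noteq> {v. p v \<noteq> v}"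
  proof
    assume "{x, u} = {v. p v \<noteq> v}"
    with odd_moved have "odd (card {x, u})" by simp
    with moved(1) show False by simp
  qed
  moreover have "{x, u} \<subseteq> {v. p v \<noteq> v}" using moved by auto
  ultimately obtain v where v: "p v \<noteq> v" "v \<noteq> x" "v \<noteq> u" by blast
  have "weight x (p x) = k" using weight_terminal_cycle[OF x] .
  moreover have "weight u (p u) = k" using weight_terminal_cycle[OF u(2,1)] weight_sym[of u "p u"]
    by simp
  moreover have "1 \<le> weight v (p v)" using weight_ge_1 v(1) by simp
  moreover have "(\<Sum>w\<in>{x, u, v}. weight w (p w)) = weight x (p x) + weight u (p u) + weight v (p v)"
    using moved(1) v(2,3) by (simp add: sum.insert_if)
  ultimately have "real m \<le> (\<Sum>w\<in>{x, u, v}. weight w (p w))" by simp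
  also have "\<dots> \<le> perm_cost weight p" by (rule sum_weight_le_perm_cost)
  finally show ?thesis .
qed

lemma perm_cost_ge:
  assumes "bij p" and "odd (card {u. p u \<noteq> u})"
  shows "m \<le> perm_cost weight p"
proof (cases "p ` C \<subseteq> C")
  case True
  have "m \<le> (\<Sum>u\<in>C. weight u (p u))"
    using odd_moved_on_invariant_cycle[OF assms(1) True assms(2)]
    by (rule cycle_invariant_cost_ge[OF assms(1) True])
  also have "\<dots> \<le> perm_cost weight p" by (rule sum_weight_le_perm_cost)
  finally show ?thesis .
next
  case False
  with assms(1) show ?thesis using assms(2) by (rule perm_cost_ge_leaving_cycle)
qed

definition cycle_next :: "nat \<Rightarrow> nat" where
  "cycle_next i = i mod m + 1"

lemma cycle_next_in: "i \<in> I \<Longrightarrow> cycle_next i \<in> I"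
  unfolding cycle_next_def by simp

lemma cycle_next_less: "i < m \<Longrightarrow> cycle_next i = i + 1"
  unfolding cycle_next_def by simp

lemma cycle_next_last: "cycle_next m = 1"
  unfolding cycle_next_def by simp

lemma cycle_next_ne: "i \<in> I \<Longrightarrow> cycle_next i \<noteq> i"
  unfolding cycle_next_def using k_ge_1 by (cases "i = m") auto

lemma odd_arc_cycle_next:
  assumes "i \<in> I"
  shows "odd_arc m i (cycle_next i) = 1"
proof (cases "i = m")
  case True
  have "odd_arc m 1 m = 1" using k_ge_1 by (simp add: odd_arc_less)
  then show ?thesis unfolding True cycle_next_last by (simp add: odd_arc_sym)
next
  case False
  with assms have "i < m" by simp
  then show ?thesis by (simp add: cycle_next_less odd_arc_less)
qed

definition rotation :: "'v \<Rightarrow> 'v" where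
  "rotation = cycle_of_list (map c [1..<m + 1])"

lemma set_cycle_list: "set [1..<m + 1] = I"
  by (auto simp del: upt_Suc)

lemma distinct_cycle_list: "distinct (map c [1..<m + 1])"
  unfolding distinct_map set_cycle_list using inj_c by (simp del: upt_Suc)

lemma rotation_c:
  assumes "i \<in> I"
  shows "rotation (c i) = c (cycle_next i)"
proof -
  let ?cs = "map c [1..<m + 1]"
  have i: "i - 1 < m" "1 + (i - 1) = i" using assms by auto
  then have "c i = ?cs ! (i - 1)" by (simp del: upt_Suc add: nth_upt)
  then have "rotation (c i) = map rotation ?cs ! (i - 1)" using i by (simp del: upt_Suc)
  also have "\<dots> = rotate1 ?cs ! (i - 1)"
    unfolding rotation_def map_cycle_of_list[OF distinct_cycle_list] ..
  also have "\<dots> = c (cycle_next i)"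
    using i by (simp del: upt_Suc add: nth_rotate1 nth_upt cycle_next_def)
  finally show ?thesis .
qed

lemma rotation_support: "{u. rotation u \<noteq> u} = C"
proof -
  have "set (map c [1..<m + 1]) = C" by (simp only: set_map set_cycle_list)
  then show ?thesis
    unfolding rotation_def using cycle_of_list_support[OF distinct_cycle_list] k_ge_1 by simp
qed

lemma perm_cost_rotation:
  "perm_cost L rotation = (\<Sum>u\<in>UNIV. L u u) + (\<Sum>i\<in>I. L (c i) (c (cycle_next i)) - L (c i) (c i))"
  unfolding perm_cost_eq_sum_support[of rotation C, OF equalityD1[OF rotation_support]]
    sum.reindex[OF inj_c] comp_def
  by (simp add: rotation_c)

inductive_set tight_triangles :: "'v list set" where
  terminals: "i \<in> I \<Longrightarrow> [s, t, c i] \<in> tight_triangles"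
| terminal_edge: "x \<in> {s, t} \<Longrightarrow> i \<in> I \<Longrightarrow> [x, c i, c (cycle_next i)] \<in> tight_triangles"
| odd_chords: "1 \<le> a \<Longrightarrow> a < b \<Longrightarrow> b < d \<Longrightarrow> d \<le> m \<Longrightarrow> odd (b - a) \<Longrightarrow> odd (d - b)
    \<Longrightarrow> [c a, c b, c d] \<in> tight_triangles"

lemma tight_triangleE:
  assumes "cs \<in> tight_triangles"
  obtains x y z where "cs = [x, y, z]" "distinct [x, y, z]" "weight x y + weight y z + weight z x = m"
  using assms
proof cases
  case (terminals i)
  then have "c i \<in> C" "c i \<noteq> s" "c i \<noteq> t" by auto
  then show ?thesis
    using that[of s t "c i"] terminals(1) s_ne_t weight_terminals weight_terminal_cycle[of t "c i"]
      weight_terminal_cycle[of s "c i"] weight_sym[of "c i" s] by simp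
next
  case (terminal_edge x i)
  then have i: "i \<in> I" "cycle_next i \<in> I" using cycle_next_in by auto
  then have "c i \<in> C" "c (cycle_next i) \<in> C" "x \<noteq> c i" "x \<noteq> c (cycle_next i)"
    using terminal_edge(2) by auto
  moreover have "c i \<noteq> c (cycle_next i)" using i cycle_next_ne[OF i(1)] by simp
  moreover have "weight (c i) (c (cycle_next i)) = 1"
    using weight_cycle[OF i cycle_next_ne[OF i(1), symmetric]] odd_arc_cycle_next[OF i(1)] by simp
  ultimately show ?thesis
    using that[of x "c i" "c (cycle_next i)"] terminal_edge(1,2) weight_terminal_cycle[of x "c i"]
      weight_terminal_cycle[of x "c (cycle_next i)"] weight_sym[of "c (cycle_next i)" x] by simp
next
  case (odd_chords a b d)
  then have abd: "a \<in> I" "b \<in> I" "d \<in> I" "a \<noteq> b" "b \<noteq> d" "d \<noteq> a" by auto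
  have "even (d - a)" using odd_chords by presburger
  with odd_chords have "odd_arc m a b = b - a" "odd_arc m b d = d - b" "odd_arc m d a = m - (d - a)"
    by (simp_all add: odd_arc_less odd_arc_sym[of _ d a])
  with odd_chords have "odd_arc m a b + odd_arc m b d + odd_arc m d a = m" by simp
  then have "weight (c a) (c b) + weight (c b) (c d) + weight (c d) (c a) = m"
    using weight_cycle[of a b] weight_cycle[of b d] weight_cycle[of d a] abd by simp
  moreover have "distinct [c a, c b, c d]" using abd by auto
  ultimately show ?thesis using that[of "c a" "c b" "c d"] odd_chords(1) by simp
qed

definition tight_perms :: "('v \<Rightarrow> 'v) set" where
  "tight_perms = insert rotation (cycle_of_list ` (tight_triangles \<union> rev ` tight_triangles))"

lemma tight_permE:
  assumes "q \<in> tight_perms"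
  obtains (rotation) "q = rotation"
    | (triangle) x y z where "[x, y, z] \<in> tight_triangles"
        "q = cycle_of_list [x, y, z] \<or> q = cycle_of_list [z, y, x]"
proof -
  consider "q = rotation"
    | cs where "cs \<in> tight_triangles" "q = cycle_of_list cs \<or> q = cycle_of_list (rev cs)"
    using assms unfolding tight_perms_def by blast
  then show ?thesis
  proof cases
    case 1
    then show ?thesis by (rule rotation)
  next
    case (2 cs)
    moreover obtain x y z where "cs = [x, y, z]" using 2(1) by (rule tight_triangleE)
    ultimately show ?thesis using triangle by auto
  qed
qed

lemma tight_perm_props:
  assumes "q \<in> tight_perms"
  shows "bij q \<and> odd (card {u. q u \<noteq> u}) \<and> perm_cost weight q = m"
  using assms
proof (cases rule: tight_permE)
  case rotation
  have edge: "weight (c i) (c (cycle_next i)) = 1" if "i \<in> I" for i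
    using weight_cycle[OF that cycle_next_in[OF that] cycle_next_ne[OF that, symmetric]]
      odd_arc_cycle_next[OF that] by simp
  have "(\<Sum>i\<in>I. weight (c i) (c (cycle_next i))) = (\<Sum>i\<in>I. 1)" by (rule sum.cong[OF refl edge])
  then have "perm_cost weight rotation = m" unfolding perm_cost_rotation by simp
  moreover have "bij rotation" unfolding rotation_def by (rule bij_cycle_of_list)
  moreover have "odd (card {u. rotation u \<noteq> u})" unfolding rotation_support using inj_c
    by (simp add: card_image)
  ultimately show ?thesis unfolding rotation by blast
next
  case (triangle x y z)
  then obtain x' y' z' where "[x, y, z] = [x', y', z']" "distinct [x', y', z']"
    "weight x' y' + weight y' z' + weight z' x' = m"
    by (elim tight_triangleE) blast
  then have "distinct [x, y, z]" "distinct [z, y, x]"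
    "cycle_weight weight [x, y, z] = m" "cycle_weight weight [z, y, x] = m"
    using weight_sym[of x y] weight_sym[of y z] weight_sym[of z x] by (auto simp: cycle_weight_def)
  moreover have "bij (cycle_of_list cs) \<and> odd (card {u. cycle_of_list cs u \<noteq> u})
      \<and> perm_cost weight (cycle_of_list cs) = m"
    if "distinct cs" "length cs = 3" "cycle_weight weight cs = m" for cs
    using that perm_cost_cycle_of_list[OF that(1), of weight] cycle_of_list_support[OF that(1)]
    by (simp add: bij_cycle_of_list distinct_card)
  ultimately show ?thesis using triangle(2) by (auto simp del: cycle_of_list.simps)
qed

definition five_cycle :: "'v \<Rightarrow> 'v" where
  "five_cycle = cycle_of_list [s, c 1, t, c 2, c 3]"

lemma distinct_five_cycle: "distinct [s, c 1, t, c 2, c 3]"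
proof -
  have I: "1 \<in> I" "2 \<in> I" "3 \<in> I" using k_ge_1 by auto
  then show ?thesis
    using s_ne_t c_ne_terminal[OF I(1)] c_ne_terminal[OF I(2)] c_ne_terminal[OF I(3)]
      c_eq_iff[OF I(1) I(2)] c_eq_iff[OF I(1) I(3)] c_eq_iff[OF I(2) I(3)] by auto
qed

lemma five_cycle_props:
  "bij five_cycle" "odd (card {u. five_cycle u \<noteq> u})" "perm_cost weight five_cycle = 4 * k + 1"
proof -
  show "bij five_cycle" unfolding five_cycle_def by (rule bij_cycle_of_list)
  have "{u. five_cycle u \<noteq> u} = set [s, c 1, t, c 2, c 3]"
    unfolding five_cycle_def by (rule cycle_of_list_support[OF distinct_five_cycle]) simp
  then show "odd (card {u. five_cycle u \<noteq> u})"
    using distinct_card[OF distinct_five_cycle] by simp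
  have I: "1 \<in> I" "2 \<in> I" "3 \<in> I" using k_ge_1 by auto
  then have "weight s (c 1) = k" "weight (c 1) t = k" "weight t (c 2) = k" "weight (c 3) s = k"
    using weight_terminal_cycle weight_sym by auto
  moreover have "weight (c 2) (c 3) = 1"
    using I weight_cycle[of 2 3] odd_arc_cycle_next[of 2] cycle_next_less[of 2] by simp
  ultimately show "perm_cost weight five_cycle = 4 * k + 1"
    unfolding five_cycle_def perm_cost_cycle_of_list[OF distinct_five_cycle]
    by (simp add: cycle_weight_def)
qed

context
  fixes L :: "'v \<Rightarrow> 'v \<Rightarrow> real" and K0 :: real
  assumes cost_tight: "\<And>q. q \<in> tight_perms \<Longrightarrow> perm_cost L q = K0"
    and cost_five_cycle: "perm_cost L five_cycle = K0"
begin

definition reduced :: "'v \<Rightarrow> 'v \<Rightarrow> real" where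
  "reduced u v = L u v - L u u"

definition excess :: real where
  "excess = K0 - (\<Sum>u\<in>UNIV. L u u)"

definition sym_part :: "'v \<Rightarrow> 'v \<Rightarrow> real" where
  "sym_part u v = reduced u v + reduced v u"

definition potential :: "'v \<Rightarrow> real" where
  "potential v = (reduced s v - reduced v s) / 2"

lemma reduced_diag [simp]: "reduced u u = 0"
  unfolding reduced_def by simp

lemma sym_part_commute: "sym_part u v = sym_part v u"
  unfolding sym_part_def by simp

lemma perm_cost_L_reduced: "perm_cost L p = (\<Sum>u\<in>UNIV. L u u) + perm_cost reduced p"
  unfolding perm_cost_def reduced_def by (simp add: sum_subtractf)

lemma cycle_weight_reduced:
  assumes "distinct cs" "cycle_of_list cs \<in> tight_perms \<or> cycle_of_list cs = five_cycle"
  shows "cycle_weight reduced cs = excess"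
proof -
  have "(\<lambda>u v. L u v - L u u) = reduced" by (simp add: fun_eq_iff reduced_def)
  then show ?thesis
    using perm_cost_cycle_of_list[OF assms(1), of L] cost_tight cost_five_cycle assms(2)
    unfolding excess_def by auto
qed

lemma triangle_reduced:
  assumes "[x, y, z] \<in> tight_triangles"
  shows "reduced x y + reduced y z + reduced z x = excess"
    and "reduced z y + reduced y x + reduced x z = excess"
proof -
  have "distinct [x, y, z]" using assms by (rule tight_triangleE) simp
  then have "distinct [z, y, x]" by auto
  moreover have "cycle_of_list [x, y, z] \<in> tight_perms" "cycle_of_list (rev [x, y, z]) \<in> tight_perms"
    using assms unfolding tight_perms_def by blast+
  ultimately show "reduced x y + reduced y z + reduced z x = excess"
    and "reduced z y + reduced y x + reduced x z = excess"
    using cycle_weight_reduced[of "[x, y, z]"] cycle_weight_reduced[of "[z, y, x]"] \<open>distinct [x, y, z]\<close>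
    by (simp_all del: cycle_of_list.simps add: cycle_weight_def add.assoc)
qed

lemma skew_terminal_cycle:
  assumes "x \<in> {s, t}" "i \<in> I"
  shows "reduced x (c i) - reduced (c i) x = 2 * (potential (c i) - potential x)"
proof -
  have "[s, t, c i] \<in> tight_triangles" using assms(2) by (rule tight_triangles.terminals)
  note triangle = triangle_reduced[OF this]
  from assms(1) consider "x = s" | "x = t" by blast
  then show ?thesis
  proof cases
    case 1
    then show ?thesis by (simp add: potential_def)
  next
    case 2
    show ?thesis using triangle unfolding 2 potential_def by argo
  qed
qed

lemma skew_cycle_edge:
  assumes "i \<in> I"
  shows "reduced (c i) (c (cycle_next i)) - reduced (c (cycle_next i)) (c i)
    = 2 * (potential (c (cycle_next i)) - potential (c i))"
proof -
  have "[s, c i, c (cycle_next i)] \<in> tight_triangles" using assms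
    by (intro tight_triangles.terminal_edge) simp
  from triangle_reduced[OF this] show ?thesis unfolding potential_def by argo
qed

lemma skew_eq_potential: "reduced u v - reduced v u = 2 * (potential v - potential u)"
proof (rule vertex_pair_induct[where
      P = "\<lambda>u v. reduced u v - reduced v u = 2 * (potential v - potential u)"])
  show "reduced s t - reduced t s = 2 * (potential t - potential s)"
    unfolding potential_def by simp
next
  fix i j assume ij: "1 \<le> i" "i < j" "j \<le> m"
  define \<delta> where
    "\<delta> a b = reduced (c a) (c b) - reduced (c b) (c a) - 2 * (potential (c b) - potential (c a))"
    for a b
  have "\<delta> i j = 0"
  proof (rule odd_cycle_additive_zero[of m])
    show "\<delta> a (a + 1) = 0" if "1 \<le> a" "a < m" for a
      using skew_cycle_edge[of a] cycle_next_less[of a] that unfolding \<delta>_def by simp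
    show "\<delta> 1 m = 0"
      using skew_cycle_edge[of m] cycle_next_last unfolding \<delta>_def by simp
    show "\<delta> a d = \<delta> a b + \<delta> b d"
      if "1 \<le> a" "a < b" "b < d" "d \<le> m" "odd (b - a)" "odd (d - b)" for a b d
      using triangle_reduced[OF tight_triangles.odd_chords[OF that]] unfolding \<delta>_def by simp
  qed (use ij in simp_all)
  then show "reduced (c i) (c j) - reduced (c j) (c i) = 2 * (potential (c j) - potential (c i))"
    unfolding \<delta>_def by simp
qed (use skew_terminal_cycle in auto)

lemma sym_part_diag [simp]: "sym_part u u = 0"
  unfolding sym_part_def by simp

lemma perm_cost_reduced_sym:
  assumes "bij p"
  shows "perm_cost reduced p = perm_cost (\<lambda>u v. sym_part u v / 2) p"
proof -
  have "reduced u v = sym_part u v / 2 + (potential v - potential u)" for u v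
    using skew_eq_potential[of u v] unfolding sym_part_def by argo
  then have "perm_cost reduced p
      = perm_cost (\<lambda>u v. sym_part u v / 2) p + perm_cost (\<lambda>u v. potential v - potential u) p"
    unfolding perm_cost_def by (simp add: sum.distrib)
  then show ?thesis using perm_cost_potential[OF assms] by simp
qed

lemma perm_cost_sym_part_tight:
  assumes "q \<in> tight_perms \<or> q = five_cycle"
  shows "perm_cost (\<lambda>u v. sym_part u v / 2) q = excess"
proof -
  have "bij q" using assms tight_perm_props five_cycle_props by blast
  moreover have "perm_cost L q = K0" using assms cost_tight cost_five_cycle by blast
  ultimately show ?thesis
    using perm_cost_reduced_sym perm_cost_L_reduced[of q] unfolding excess_def by simp
qed

lemma triangle_sym_part:
  assumes "[x, y, z] \<in> tight_triangles"
  shows "sym_part x y + sym_part y z + sym_part z x = 2 * excess"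
  using triangle_reduced[OF assms] unfolding sym_part_def by argo

lemma sym_part_terminal_cycle:
  assumes "i \<in> I"
  shows "sym_part s (c i) = excess - sym_part s t / 2"
    and "sym_part t (c i) = excess - sym_part s t / 2"
proof -
  have edge: "sym_part x (c j) + sym_part (c j) (c (cycle_next j)) + sym_part (c (cycle_next j)) x
      = 2 * excess"
    if "x \<in> {s, t}" "j \<in> I" for x j
    using triangle_sym_part[OF tight_triangles.terminal_edge[OF that]] .
  define f where "f j = sym_part s (c j) - sym_part t (c j)" for j
  have alternate: "f (cycle_next j) = - f j" if "j \<in> I" for j
    using edge[of s j] edge[of t j] that sym_part_commute[of "c (cycle_next j)"] unfolding f_def
      by simp
  have "f i = 0"
  proof (rule alternating_odd_cycle_zero[of m f i])
    show "f (j + 1) = - f j" if "1 \<le> j" "j < m" for j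
      using alternate[of j] cycle_next_less[of j] that by simp
    show "f 1 = - f m" using alternate[of m] cycle_next_last by simp
  qed (use assms in auto)
  moreover have "sym_part s t + sym_part t (c i) + sym_part (c i) s = 2 * excess"
    using triangle_sym_part[OF tight_triangles.terminals[OF assms]] .
  ultimately show "sym_part s (c i) = excess - sym_part s t / 2"
    and "sym_part t (c i) = excess - sym_part s t / 2"
    unfolding f_def using sym_part_commute[of "c i" s] by argo+
qed

lemma sym_part_cycle_edge:
  assumes "i \<in> I"
  shows "sym_part (c i) (c (cycle_next i)) = sym_part s t"
  using triangle_sym_part[OF tight_triangles.terminal_edge[of s i]] assms
    sym_part_terminal_cycle(1)[OF assms] sym_part_terminal_cycle(1)[OF cycle_next_in[OF assms]]
    sym_part_commute[of "c (cycle_next i)" s]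
  by simp

lemma excess_eq_zero: "excess = 0" and sym_part_terminals: "sym_part s t = 0"
proof -
  let ?e = "sym_part s t"
  have I: "1 \<in> I" "2 \<in> I" "3 \<in> I" using k_ge_1 by auto
  have "excess = perm_cost (\<lambda>u v. sym_part u v / 2) rotation"
    using perm_cost_sym_part_tight[of rotation] by (simp add: tight_perms_def)
  also have "\<dots> = (\<Sum>i\<in>I. sym_part (c i) (c (cycle_next i)) / 2)"
    unfolding perm_cost_rotation by simp
  also have "\<dots> = (\<Sum>i\<in>I. ?e / 2)" using sym_part_cycle_edge by simp
  finally have rotation: "excess = m * ?e / 2" by simp
  have "excess = perm_cost (\<lambda>u v. sym_part u v / 2) five_cycle"
    using perm_cost_sym_part_tight[of five_cycle] by simp
  also have "\<dots> = (sym_part s (c 1) + sym_part (c 1) t + sym_part t (c 2)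
      + sym_part (c 2) (c 3) + sym_part (c 3) s) / 2"
    unfolding five_cycle_def perm_cost_cycle_of_list[OF distinct_five_cycle]
    by (simp add: cycle_weight_def)
  also have "\<dots> = 2 * excess - ?e / 2"
    using sym_part_terminal_cycle[OF I(1)] sym_part_terminal_cycle[OF I(2)]
      sym_part_terminal_cycle[OF I(3)] sym_part_cycle_edge[OF I(2)] cycle_next_less[of 2]
      sym_part_commute[of "c 1" t] sym_part_commute[of "c 3" s]
      k_ge_1 by simp
  finally have "excess = ?e / 2" by simp
  with rotation k_ge_1 show "?e = 0" by simp
  with \<open>excess = ?e / 2\<close> show "excess = 0" by simp
qed

lemma sym_part_zero: "sym_part u v = 0"
proof (rule vertex_pair_induct[where P = "\<lambda>u v. sym_part u v = 0"])
  fix i j assume ij: "1 \<le> i" "i < j" "j \<le> m"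
  define \<delta> where "\<delta> a b = (if odd (b - a) then 1 else -1) * sym_part (c a) (c b)" for a b
  have "\<delta> i j = 0"
  proof (rule odd_cycle_additive_zero[of m])
    show "\<delta> a (a + 1) = 0" if "1 \<le> a" "a < m" for a
      using sym_part_cycle_edge[of a] cycle_next_less[of a] sym_part_terminals that unfolding \<delta>_def
        by simp
    show "\<delta> 1 m = 0"
      using sym_part_cycle_edge[of m] cycle_next_last sym_part_terminals
        sym_part_commute[of "c 1" "c m"]
      unfolding \<delta>_def by simp
    show "\<delta> a d = \<delta> a b + \<delta> b d"
      if chords: "1 \<le> a" "a < b" "b < d" "d \<le> m" "odd (b - a)" "odd (d - b)" for a b d
    proof -
      have "even (d - a)" using chords by presburger
      then show ?thesis
        using triangle_sym_part[OF tight_triangles.odd_chords[OF chords]] excess_eq_zero chords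
          sym_part_commute[of "c d" "c a"]
        unfolding \<delta>_def by simp
    qed
  qed (use ij in simp_all)
  then show "sym_part (c i) (c j) = 0" unfolding \<delta>_def by (simp split: if_splits)
qed (use sym_part_commute sym_part_terminals sym_part_terminal_cycle excess_eq_zero in auto)

lemma perm_cost_constant:
  assumes "bij p"
  shows "perm_cost L p = K0"
  using perm_cost_L_reduced[of p] perm_cost_reduced_sym[OF assms] excess_eq_zero
  unfolding excess_def sym_part_zero by (simp add: perm_cost_def)

end

lemma odd_perm_vectors_affine_hull:
  "odd_perm_vectors \<subseteq> affine hull (insert (perm_vector five_cycle) (perm_vector ` tight_perms))"
proof (rule subset_affine_hull_if_functionals_agree)
  show "perm_vector rotation \<in> insert (perm_vector five_cycle) (perm_vector ` tight_perms)"
    by (simp add: tight_perms_def)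
  fix z y :: "'v hvec"
  assume agree: "\<And>x. x \<in> insert (perm_vector five_cycle) (perm_vector ` tight_perms)
      \<Longrightarrow> z \<bullet> x = z \<bullet> perm_vector rotation"
    and "y \<in> odd_perm_vectors"
  then obtain p :: "'v \<Rightarrow> 'v" where "bij p" "y = perm_vector p"
    unfolding odd_perm_vectors_def by blast
  have "perm_cost (\<lambda>u v. z $ hat_edge u v) p = z \<bullet> perm_vector rotation"
    by (rule perm_cost_constant[OF _ _ \<open>bij p\<close>])
      (use agree in \<open>auto simp: inner_perm_vector[symmetric]\<close>)
  then show "z \<bullet> y = z \<bullet> perm_vector rotation" by (simp add: \<open>y = perm_vector p\<close> inner_perm_vector)
qed

end

theorem corollary11:
  fixes n k :: nat and c :: "nat \<Rightarrow> 'v::finite" and s t :: 'v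
  assumes "CARD('v) = n" and "n \<ge> 5" and "odd n" and "k = (n - 3) div 2"
    and "inj_on c {1..2*k+1}"
    and "s \<noteq> t" and "s \<notin> c ` {1..2*k+1}" and "t \<notin> c ` {1..2*k+1}"
  shows "(\<forall>y \<in> odd_pm_polytope UNIV (complete_edges UNIV).
            canon_lhs (complete_edges UNIV) (C_induced_coeff UNIV (complete_edges UNIV) c k s t) y
              \<ge> real (2*k+1))
       \<and> {y \<in> odd_pm_polytope UNIV (complete_edges UNIV).
            canon_lhs (complete_edges UNIV) (C_induced_coeff UNIV (complete_edges UNIV) c k s t) y
              = real (2*k+1)} facet_of odd_pm_polytope UNIV (complete_edges UNIV)"
proof -
  interpret C_induced_setup n k c s t by (rule C_induced_setup.intro) (fact assms)+
  let ?a = "C_induced_coeff UNIV (complete_edges UNIV) c k s t"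
  define w where "w = canon_weight (complete_edges UNIV) ?a"
  have lhs: "canon_lhs (complete_edges UNIV) ?a y = w \<bullet> y" for y
    unfolding w_def by (rule canon_lhs_eq_inner)
  have cost: "w \<bullet> perm_vector p = perm_cost weight p" for p
    using canon_lhs_C_induced[of p] lhs by simp
  have valid: "real m \<le> w \<bullet> x" if "x \<in> odd_perm_vectors" for x
    using that perm_cost_ge cost unfolding odd_perm_vectors_def by auto
  have "convex hull odd_perm_vectors \<inter> {x. w \<bullet> x = real m} facet_of convex hull odd_perm_vectors"
  proof (rule facet_of_convex_hull_hyperplane[OF valid])
    show "perm_vector ` tight_perms \<subseteq> odd_perm_vectors"
      using tight_perm_props unfolding odd_perm_vectors_def by blast
    show "w \<bullet> x = real m" if "x \<in> perm_vector ` tight_perms" for x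
      using that tight_perm_props cost by auto
    show "perm_vector five_cycle \<in> odd_perm_vectors"
      using five_cycle_props unfolding odd_perm_vectors_def by blast
    show "w \<bullet> perm_vector five_cycle \<noteq> real m"
      using five_cycle_props(3) cost k_ge_1 by simp
  qed (use odd_perm_vectors_affine_hull in \<open>auto simp: tight_perms_def\<close>)
  moreover have "{y \<in> convex hull odd_perm_vectors. w \<bullet> y = real m}
      = convex hull odd_perm_vectors \<inter> {x. w \<bullet> x = real m}" by blast
  ultimately show ?thesis
    unfolding odd_pm_polytope_complete lhs using convex_hull_halfspace_ge[OF valid] by auto
qed

end
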